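(* For every pair of disjoint sets $A,B\subseteq\{0,1,2\}^n$, \[ |\partial A| + |\partial B| \ge 3^{-n}\,|A|\,|B|. \]
   Context: For $S\subseteq\{0,1,2\}^n$ and $1\le i\le n$, the upper edge border in direction $i$ is $\partial_i S=\{(v_{-i},v_i,v_i') : (v_{-i},v_i)\in S,\ (v_{-i},v_i')\notin S,\ v_i<v_i'\}$, where $v_i,v_i'\in\{0,1,2\}$ and $(v_{-i},t)$ denotes the vector agreeing with $v$ off coordinate $i$ and equal to $t$ at coordinate $i$. The upper edge border is $\partial S=\bigcup_i\partial_i S$ (a disjoint union), so $|\partial S|=\sum_i|\partial_i S|$. *)

theory Defs
  imports Complex_Main
begin

text \<open>Vectors in {0,1,2}^n are represented as functions nat => nat with values in {0,1,2}
  on coordinates 0..n-1 and value 0 outside (extensional representation).\<close>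

definition cube :: "nat \<Rightarrow> (nat \<Rightarrow> nat) set" where
  "cube n = {v. (\<forall>i<n. v i \<le> 2) \<and> (\<forall>i\<ge>n. v i = 0)}"

definition border_dir :: "(nat \<Rightarrow> nat) set \<Rightarrow> nat \<Rightarrow> ((nat \<Rightarrow> nat) \<times> nat \<times> nat) set" where
  "border_dir S i = {(v, a, b). v \<in> S \<and> v i = a \<and> a < b \<and> b \<le> 2 \<and> v(i := b) \<notin> S}"

definition border_size :: "nat \<Rightarrow> (nat \<Rightarrow> nat) set \<Rightarrow> nat" where
  "border_size n S = (\<Sum>i<n. card (border_dir S i))"

end

theory Submission
  imports Defs
begin

(* Proof by induction on the dimension n, slicing along the last coordinate.
   For S \<subseteq> {0,1,2}^(n+1) let S_j \<subseteq> {0,1,2}^n be the slice of points whose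
   last coordinate is j.  Then |S| = |S_0| + |S_1| + |S_2|, and the border of S
   splits into the borders of the three slices (directions i < n) plus the
   "vertical" border in direction n, which contains a copy of S_j - S_k for
   every j < k.  Writing a_j = |A_j|, b_j = |B_j|, N = 3^n, the identity
     (a_0+a_1+a_2)(b_0+b_1+b_2) = 3 \<Sum> a_j b_j + \<Sum>_{j<k} (a_j-a_k)(b_k-b_j)
   reduces the claim to the induction hypothesis for the slice pairs
   (A_j, B_j) and to the bound (a_j-a_k)(b_k-b_j) \<le> N (|A_j-A_k| + |B_j-B_k|),
   which holds because a_j, b_j \<le> N and a_j - a_k \<le> |A_j - A_k|. *)

lemma cube_0: "cube 0 = {\<lambda>_. 0}"
  by (auto simp: cube_def)

lemma cube_Suc_subset: "cube (Suc n) \<subseteq> (\<lambda>(w, j). w(n := j)) ` (cube n \<times> {..2::nat})"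
proof
  fix v assume v: "v \<in> cube (Suc n)"
  have "v = (\<lambda>(w, j). w(n := j)) (v(n := 0), v n)" by simp
  moreover have "(v(n := 0), v n) \<in> cube n \<times> {..2}" using v by (auto simp: cube_def)
  ultimately show "v \<in> (\<lambda>(w, j). w(n := j)) ` (cube n \<times> {..2::nat})" by blast
qed

text \<open>The cube is finite with at most 3^n points (in fact exactly 3^n, but
  the upper bound is all that the slice estimates need).\<close>

lemma finite_cube: "finite (cube n)"
proof (induction n)
  case (Suc n)
  then show ?case using finite_subset[OF cube_Suc_subset] by blast
qed (simp add: cube_0)

lemma card_cube_le: "card (cube n) \<le> 3 ^ n"
proof (induction n)
  case (Suc n)
  have fin: "finite (cube n \<times> {..2::nat})" using finite_cube by simp
  have "card (cube (Suc n)) \<le> card ((\<lambda>(w, j). w(n := j)) ` (cube n \<times> {..2::nat}))"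
    by (rule card_mono[OF finite_imageI[OF fin] cube_Suc_subset])
  also have "\<dots> \<le> card (cube n \<times> {..2::nat})" by (rule card_image_le[OF fin])
  also have "\<dots> = card (cube n) * 3" by (simp add: card_cartesian_product)
  also have "\<dots> \<le> 3 ^ Suc n" using Suc by simp
  finally show ?case .
qed (simp add: cube_0)

lemma finite_subset_cube: "S \<subseteq> cube n \<Longrightarrow> finite S"
  using finite_cube finite_subset by blast

section \<open>Slices along the last coordinate\<close>

definition slice :: "nat \<Rightarrow> (nat \<Rightarrow> nat) set \<Rightarrow> nat \<Rightarrow> (nat \<Rightarrow> nat) set" where
  "slice n S j = {w. w n = 0 \<and> w(n := j) \<in> S}"

lemma slice_subset_cube:
  assumes "S \<subseteq> cube (Suc n)"
  shows "slice n S j \<subseteq> cube n"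
proof
  fix w assume "w \<in> slice n S j"
  hence w0: "w n = 0" and c: "w(n := j) \<in> cube (Suc n)" using assms by (auto simp: slice_def)
  have "w i \<le> 2" if "i < n" for i
  proof -
    from c have "\<forall>k<Suc n. (w(n := j)) k \<le> 2" unfolding cube_def by blast
    then have "(w(n := j)) i \<le> 2" using that less_SucI by blast
    then show ?thesis using that by simp
  qed
  moreover have "w i = 0" if "i \<ge> n" for i
    using c w0 that unfolding cube_def by (cases "i = n") auto
  ultimately show "w \<in> cube n" by (simp add: cube_def)
qed

lemma card_slice_le:
  assumes "S \<subseteq> cube (Suc n)"
  shows "card (slice n S j) \<le> 3 ^ n"
  using order_trans[OF card_mono[OF finite_cube slice_subset_cube[OF assms]] card_cube_le] .

lemma finite_slice: "S \<subseteq> cube (Suc n) \<Longrightarrow> finite (slice n S j)"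
  using finite_subset_cube[OF slice_subset_cube] .

lemma slice_disjoint: "A \<inter> B = {} \<Longrightarrow> slice n A j \<inter> slice n B j = {}"
  by (auto simp: slice_def)

lemma slice_decomposition:
  assumes "S \<subseteq> cube (Suc n)"
  shows "S = (\<lambda>w. w(n := 0)) ` slice n S 0 \<union> (\<lambda>w. w(n := 1)) ` slice n S 1
             \<union> (\<lambda>w. w(n := 2)) ` slice n S 2"
proof
  show "S \<subseteq> (\<lambda>w. w(n := 0)) ` slice n S 0 \<union> (\<lambda>w. w(n := 1)) ` slice n S 1
             \<union> (\<lambda>w. w(n := 2)) ` slice n S 2"
  proof
    fix v assume v: "v \<in> S"
    have lifted: "v \<in> (\<lambda>w. w(n := v n)) ` slice n S (v n)"
    proof
      show "v = (v(n := 0))(n := v n)" by simp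
      show "v(n := 0) \<in> slice n S (v n)" using v by (simp add: slice_def)
    qed
    have "v n \<le> 2" using v assms by (auto simp: cube_def)
    hence "v n = 0 \<or> v n = 1 \<or> v n = 2" by auto
    thus "v \<in> (\<lambda>w. w(n := 0)) ` slice n S 0 \<union> (\<lambda>w. w(n := 1)) ` slice n S 1
             \<union> (\<lambda>w. w(n := 2)) ` slice n S 2"
      using lifted by (elim disjE) simp_all
  qed
  show "(\<lambda>w. w(n := 0)) ` slice n S 0 \<union> (\<lambda>w. w(n := 1)) ` slice n S 1
             \<union> (\<lambda>w. w(n := 2)) ` slice n S 2 \<subseteq> S"
    unfolding slice_def by blast
qed

text \<open>Lifting a slice back to height j is injective, since coordinate n of a
  slice element is 0.\<close>

lemma inj_on_lift_slice: "inj_on (\<lambda>w. w(n := j)) (slice n S j)"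
proof (rule inj_onI)
  fix v w assume "v \<in> slice n S j" "w \<in> slice n S j" and eq: "v(n := j) = w(n := j)"
  then have "v n = 0" "w n = 0" by (simp_all add: slice_def)
  have "v = (v(n := j))(n := 0)" using \<open>v n = 0\<close> by (simp add: fun_eq_iff)
  also have "\<dots> = (w(n := j))(n := 0)" by (simp only: eq)
  also have "\<dots> = w" using \<open>w n = 0\<close> by (simp add: fun_eq_iff)
  finally show "v = w" .
qed

lemma card_Un3_disjoint:
  "finite X \<Longrightarrow> finite Y \<Longrightarrow> finite Z \<Longrightarrow> X \<inter> Y = {} \<Longrightarrow> X \<inter> Z = {} \<Longrightarrow> Y \<inter> Z = {}
   \<Longrightarrow> card (X \<union> Y \<union> Z) = card X + card Y + card Z"
  by (simp add: card_Un_disjoint Int_Un_distrib2)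

lemma card_slices:
  assumes S: "S \<subseteq> cube (Suc n)"
  shows "card S = card (slice n S 0) + card (slice n S 1) + card (slice n S 2)"
proof -
  have lift_card: "card ((\<lambda>w. w(n := j)) ` slice n S j) = card (slice n S j)" for j
    by (rule card_image[OF inj_on_lift_slice])
  have lift_disjoint: "(\<lambda>w. w(n := j)) ` slice n S j \<inter> (\<lambda>w. w(n := k)) ` slice n S k = {}"
    if "j \<noteq> k" for j k
    using that by (auto dest!: fun_cong[where x = n])
  have "card S = card ((\<lambda>w. w(n := 0)) ` slice n S 0 \<union> (\<lambda>w. w(n := 1)) ` slice n S 1
                       \<union> (\<lambda>w. w(n := 2)) ` slice n S 2)"
    by (rule arg_cong[where f = card, OF slice_decomposition[OF S]])
  also have "\<dots> = card ((\<lambda>w. w(n := 0)) ` slice n S 0) + card ((\<lambda>w. w(n := 1)) ` slice n S 1)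
                 + card ((\<lambda>w. w(n := 2)) ` slice n S 2)"
    by (rule card_Un3_disjoint) (simp_all add: finite_slice[OF S] lift_disjoint)
  finally show ?thesis by (simp only: lift_card)
qed

section \<open>Decomposition of the border\<close>

lemma finite_border_dir: "finite S \<Longrightarrow> finite (border_dir S i)"
proof -
  assume "finite S"
  have "border_dir S i \<subseteq> S \<times> {..2::nat} \<times> {..2::nat}" by (auto simp: border_dir_def)
  thus ?thesis using \<open>finite S\<close> finite_subset by blast
qed

text \<open>In a direction i < n, the borders of the three slices lift injectively and
  disjointly into the border of S.\<close>

lemma border_dir_slices_le:
  assumes S: "S \<subseteq> cube (Suc n)" and i: "i < n"
  shows "card (border_dir (slice n S 0) i) + card (border_dir (slice n S 1) i)
           + card (border_dir (slice n S 2) i)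
         \<le> card (border_dir S i)"
proof -
  define lift where "lift j = (\<lambda>(w::nat \<Rightarrow> nat, a::nat, b::nat). (w(n := j), a, b))" for j :: nat
  have "i \<noteq> n" using i by simp
  have lift_into: "lift j ` border_dir (slice n S j) i \<subseteq> border_dir S i" for j
  proof
    fix x assume "x \<in> lift j ` border_dir (slice n S j) i"
    then obtain w a b where x: "x = (w(n := j), a, b)" and m: "(w, a, b) \<in> border_dir (slice n S j) i"
      unfolding lift_def by auto
    from m have w0: "w n = 0" and wS: "w(n := j) \<in> S" and "w i = a" "a < b" "b \<le> 2"
      and out: "w(i := b) \<notin> slice n S j" by (auto simp: border_dir_def slice_def)
    have "(w(i := b))(n := j) \<notin> S" using out w0 \<open>i \<noteq> n\<close> by (simp add: slice_def)
    hence "(w(n := j))(i := b) \<notin> S" using \<open>i \<noteq> n\<close> by (simp add: fun_upd_twist)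
    thus "x \<in> border_dir S i" using x wS \<open>w i = a\<close> \<open>a < b\<close> \<open>b \<le> 2\<close> \<open>i \<noteq> n\<close>
      by (simp add: border_dir_def)
  qed
  have lift_inj: "inj_on (lift j) (border_dir (slice n S j) i)" for j
  proof (rule inj_onI)
    fix x y assume "x \<in> border_dir (slice n S j) i" "y \<in> border_dir (slice n S j) i"
      and eq: "lift j x = lift j y"
    moreover obtain w a b w' a' b' where "x = (w, a, b)" "y = (w', a', b')" by (metis prod.exhaust)
    ultimately have "w \<in> slice n S j" "w' \<in> slice n S j" "w(n := j) = w'(n := j)" "a = a'" "b = b'"
      by (auto simp: border_dir_def lift_def)
    then have "w = w'" using inj_onD[OF inj_on_lift_slice] by blast
    thus "x = y" using \<open>x = (w, a, b)\<close> \<open>y = (w', a', b')\<close> \<open>a = a'\<close> \<open>b = b'\<close> by simp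
  qed
  have lift_disjoint: "lift j ` border_dir (slice n S j) i \<inter> lift k ` border_dir (slice n S k) i = {}"
    if "j \<noteq> k" for j k
  proof -
    have "fst (lift j x) n = j" for j x by (cases x) (simp add: lift_def)
    thus ?thesis using that by (metis disjoint_iff imageE)
  qed
  have fin: "finite (border_dir (slice n S j) i)" for j
    using finite_border_dir finite_slice[OF S] by blast
  have "card (border_dir (slice n S 0) i) + card (border_dir (slice n S 1) i)
          + card (border_dir (slice n S 2) i)
      = card (lift 0 ` border_dir (slice n S 0) i \<union> lift 1 ` border_dir (slice n S 1) i
              \<union> lift 2 ` border_dir (slice n S 2) i)"
    by (subst card_Un3_disjoint) (simp_all add: fin lift_disjoint card_image[OF lift_inj])
  also have "\<dots> \<le> card (border_dir S i)"
    by (rule card_mono) (simp_all add: finite_border_dir[OF finite_subset_cube[OF S]] lift_into)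
  finally show ?thesis .
qed

text \<open>In direction n, each point of S_j - S_k with j < k gives the border edge
  from height j to height k; different pairs (j,k) give different edges.\<close>

lemma slice_differences_le_border_dir:
  assumes S: "S \<subseteq> cube (Suc n)"
  shows "card (slice n S 0 - slice n S 1) + card (slice n S 0 - slice n S 2)
           + card (slice n S 1 - slice n S 2)
         \<le> card (border_dir S n)"
proof -
  define edge where "edge j k = (\<lambda>w::nat \<Rightarrow> nat. (w(n := j), j, k))" for j k :: nat
  have edge_into: "edge j k ` (slice n S j - slice n S k) \<subseteq> border_dir S n"
    if "j < k" "k \<le> 2" for j k
    using that by (auto simp: edge_def slice_def border_dir_def)
  have edge_inj: "inj_on (edge j k) (slice n S j - slice n S k)" for j k
    using inj_on_lift_slice[of n j S] unfolding inj_on_def edge_def by auto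
  have edge_disjoint: "edge j k ` X \<inter> edge j' k' ` Y = {}" if "(j, k) \<noteq> (j', k')" for j k j' k' X Y
    using that by (auto simp: edge_def)
  have fin: "finite (slice n S j - slice n S k)" for j k
    using finite_slice[OF S] by blast
  have "card (slice n S 0 - slice n S 1) + card (slice n S 0 - slice n S 2)
          + card (slice n S 1 - slice n S 2)
      = card (edge 0 1 ` (slice n S 0 - slice n S 1) \<union> edge 0 2 ` (slice n S 0 - slice n S 2)
              \<union> edge 1 2 ` (slice n S 1 - slice n S 2))"
    by (subst card_Un3_disjoint) (simp_all add: fin edge_disjoint card_image[OF edge_inj])
  also have "\<dots> \<le> card (border_dir S n)"
    by (rule card_mono) (simp_all add: finite_border_dir[OF finite_subset_cube[OF S]] edge_into)
  finally show ?thesis .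
qed

lemma border_size_slices:
  assumes S: "S \<subseteq> cube (Suc n)"
  shows "border_size n (slice n S 0) + border_size n (slice n S 1) + border_size n (slice n S 2)
         + (card (slice n S 0 - slice n S 1) + card (slice n S 0 - slice n S 2)
            + card (slice n S 1 - slice n S 2))
         \<le> border_size (Suc n) S"
proof -
  have "border_size n (slice n S 0) + border_size n (slice n S 1) + border_size n (slice n S 2)
      = (\<Sum>i<n. card (border_dir (slice n S 0) i) + card (border_dir (slice n S 1) i)
                + card (border_dir (slice n S 2) i))"
    by (simp add: border_size_def sum.distrib)
  also have "\<dots> \<le> (\<Sum>i<n. card (border_dir S i))"
    by (rule sum_mono) (rule border_dir_slices_le[OF S], simp)
  finally show ?thesis
    using slice_differences_le_border_dir[OF S] by (simp add: border_size_def)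
qed

lemma product_of_sums_3:
  fixes a0 a1 a2 b0 b1 b2 :: "'a :: comm_ring_1"
  shows "(a0 + a1 + a2) * (b0 + b1 + b2) = 3 * (a0 * b0 + a1 * b1 + a2 * b2)
           + (a0 - a1) * (b1 - b0) + (a0 - a2) * (b2 - b0) + (a1 - a2) * (b2 - b1)"
  by (simp add: algebra_simps numeral_3_eq_3)

text \<open>If a, b \<ge> 0 and a', b' \<le> N (so a' - a and b' - b are at most N), and the
  differences a - a', b - b' are dominated by nonnegative al, be, then the mixed
  product (a - a')(b' - b) is at most N (al + be): whichever factor is positive is
  bounded by N, the other by al or be.\<close>

lemma mixed_product_le:
  fixes a a' b b' N al be :: "'a :: linordered_idom"
  assumes "0 \<le> a" "a' \<le> N" "0 \<le> b" "b' \<le> N" "0 \<le> N"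
    and "a - a' \<le> al" "0 \<le> al" "b - b' \<le> be" "0 \<le> be"
  shows "(a - a') * (b' - b) \<le> N * (al + be)"
proof -
  consider "a' \<le> a" "b \<le> b'" | "a \<le> a'" "b' \<le> b" | "(a - a') * (b' - b) \<le> 0"
    by (metis le_cases diff_ge_0_iff_ge diff_le_0_iff_le mult_nonneg_nonpos mult_nonpos_nonneg)
  then show ?thesis
  proof cases
    case 1
    have "(a - a') * (b' - b) \<le> al * N" using 1 assms by (intro mult_mono) auto
    then show ?thesis using \<open>0 \<le> N\<close> assms by (simp add: distrib_left mult.commute add_increasing2)
  next
    case 2
    have "(a' - a) * (b - b') \<le> N * be" using 2 assms by (intro mult_mono) auto
    moreover have "(a - a') * (b' - b) = (a' - a) * (b - b')" by (simp add: algebra_simps)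
    ultimately show ?thesis using \<open>0 \<le> N\<close> assms by (simp add: distrib_left add_increasing)
  next
    case 3
    then show ?thesis using \<open>0 \<le> N\<close> assms by (meson add_nonneg_nonneg order_trans mult_nonneg_nonneg)
  qed
qed

lemma card_diff_ge:
  assumes "finite Y"
  shows "real (card X) - real (card Y) \<le> real (card (X - Y))"
proof -
  have "card X \<le> card (X - Y) + card Y" using diff_card_le_card_Diff[OF assms, of X] by linarith
  then have "real (card X) \<le> real (card (X - Y) + card Y)" by (simp only: of_nat_le_iff)
  then show ?thesis by simp
qed

lemma slice_mixed_product_le:
  assumes A: "A \<subseteq> cube (Suc n)" and B: "B \<subseteq> cube (Suc n)"
  shows "(real (card (slice n A j)) - real (card (slice n A k)))
           * (real (card (slice n B k)) - real (card (slice n B j)))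
         \<le> 3 ^ n * (real (card (slice n A j - slice n A k)) + real (card (slice n B j - slice n B k)))"
proof -
  have "real (card (slice n S l)) \<le> 3 ^ n" if "S \<subseteq> cube (Suc n)" for S l
    using card_slice_le[OF that, of l] by (metis of_nat_le_iff of_nat_numeral of_nat_power)
  then show ?thesis
    by (intro mixed_product_le) (simp_all add: A B card_diff_ge finite_slice)
qed

text \<open>Base case: the 0-cube has a single point, so one of two disjoint
  subsets is empty.\<close>

lemma border_bound_dim_0:
  assumes "A \<subseteq> cube 0" and "B \<subseteq> cube 0" and "A \<inter> B = {}"
  shows "real (card A) * real (card B) / 3 ^ 0 \<le> real (border_size 0 A) + real (border_size 0 B)"
proof -
  have "A = {} \<or> B = {}" using assms by (auto simp: cube_0)
  thus ?thesis by (auto simp: border_size_def)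
qed

lemma border_bound_step:
  assumes A: "A \<subseteq> cube (Suc n)" and B: "B \<subseteq> cube (Suc n)"
    and IH: "\<And>j. real (card (slice n A j)) * real (card (slice n B j)) / 3 ^ n
                  \<le> real (border_size n (slice n A j)) + real (border_size n (slice n B j))"
  shows "real (card A) * real (card B) / 3 ^ Suc n
         \<le> real (border_size (Suc n) A) + real (border_size (Suc n) B)"
proof -
  define N :: real where "N = 3 ^ n"
  define a where "a j = real (card (slice n A j))" for j
  define b where "b j = real (card (slice n B j))" for j
  define P where "P j = real (border_size n (slice n A j)) + real (border_size n (slice n B j))" for j
  define dA where "dA = real (card (slice n A 0 - slice n A 1)) + real (card (slice n A 0 - slice n A 2))
                          + real (card (slice n A 1 - slice n A 2))"
  define dB where "dB = real (card (slice n B 0 - slice n B 1)) + real (card (slice n B 0 - slice n B 2))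
                          + real (card (slice n B 1 - slice n B 2))"
  have "N > 0" by (simp add: N_def)
  have diag: "a j * b j \<le> N * P j" for j
    using IH[of j] \<open>N > 0\<close> by (simp add: a_def b_def P_def N_def pos_divide_le_eq mult.commute)
  note mixed = slice_mixed_product_le[OF A B, folded N_def a_def b_def]
  have border: "P 0 + P 1 + P 2 + dA + dB \<le> real (border_size (Suc n) A) + real (border_size (Suc n) B)"
    using border_size_slices[OF A] border_size_slices[OF B]
    unfolding P_def dA_def dB_def by (simp only: of_nat_add[symmetric] of_nat_le_iff)
  have "real (card A) * real (card B) = (a 0 + a 1 + a 2) * (b 0 + b 1 + b 2)"
    by (simp add: card_slices[OF A] card_slices[OF B] a_def b_def)
  also have "\<dots> \<le> 3 * (N * P 0 + N * P 1 + N * P 2) + N * dA + N * dB"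
    unfolding product_of_sums_3
    using diag[of 0] diag[of 1] diag[of 2] mixed[of 0 1] mixed[of 0 2] mixed[of 1 2]
    by (simp add: dA_def dB_def distrib_left)
  also have "\<dots> \<le> 3 * N * (P 0 + P 1 + P 2 + dA + dB)"
    using \<open>N > 0\<close> by (simp add: dA_def dB_def algebra_simps)
  also have "\<dots> \<le> 3 * N * (real (border_size (Suc n) A) + real (border_size (Suc n) B))"
    using border \<open>N > 0\<close> by simp
  finally show ?thesis using \<open>N > 0\<close> by (simp add: N_def pos_divide_le_eq mult.commute)
qed

theorem proposition3p5:
  fixes n :: nat and A B :: "(nat \<Rightarrow> nat) set"
  assumes "A \<subseteq> cube n" and "B \<subseteq> cube n" and "A \<inter> B = {}"
  shows "real (border_size n A) + real (border_size n B)
           \<ge> real (card A) * real (card B) / (3::real) ^ n"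
  using assms
proof (induction n arbitrary: A B)
  case 0
  then show ?case by (rule border_bound_dim_0)
next
  case (Suc n)
  from Suc.prems have A: "A \<subseteq> cube (Suc n)" and B: "B \<subseteq> cube (Suc n)"
    and disjoint: "A \<inter> B = {}" by simp_all
  show ?case
  proof (rule border_bound_step[OF A B])
    fix j
    show "real (card (slice n A j)) * real (card (slice n B j)) / 3 ^ n
          \<le> real (border_size n (slice n A j)) + real (border_size n (slice n B j))"
      by (rule Suc.IH[OF slice_subset_cube[OF A] slice_subset_cube[OF B] slice_disjoint[OF disjoint]])
  qed
qed

end
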